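(* Let $G=(V,P,d)$ be a reversible metric Markov chain with non-negative Ollivier curvature. Assume $V=X\,\dot\cup\,K\,\dot\cup\,Y$ with $K$ a nonempty finite set and no $x\in X$, $y\in Y$ with $x\sim y$. Then there exists a 1-Lipschitz function $f$ and a constant $C$ such that (i) $\Delta f=C$ on $K$; (ii) $f=\min\{g\in\operatorname{Lip}(1): g|_K=f|_K\}$ on $X$; (iii) $f=\max\{g\in\operatorname{Lip}(1): g|_K=f|_K\}$ on $Y$. Moreover, $\Delta f\ge C$ on $X$ and $\Delta f\le C$ on $Y$.
   Context: A reversible metric Markov chain $G=(V,P,d)$: $V$ finite; $P:V\times V\to[0,\infty)$ with symmetric support; write $x\sim y$ iff $x\ne y$ and $P(x,y)>0$; $d:V\times V\to[0,\infty)$ is a path distance, i.e. $d(x,y)=\inf\{\sum_{k=1}^nd(x_{k-1},x_k): x=x_0\sim\dots\sim x_n=y\}$, finite for all $x,y$ (connectedness); there is a probability $m$ with $m(x)P(x,y)=m(y)P(y,x)$. $\operatorname{Lip}(1)=\{f:|f(y)-f(x)|\le d(x,y)\ \forall x,y\}$. $\Delta f(x)=\sum_yP(x,y)(f(y)-f(x))$. Ollivier curvature of $x\sim y$: $\kappa(x,y)=\inf\{(\Delta f(x)-\Delta f(y))/d(x,y): f\in\operatorname{Lip}(1),\ f(y)-f(x)=d(x,y)\}$; non-negative Ollivier curvature means $\kappa(x,y)\ge0$ for all $x\sim y$. *)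

theory Defs
  imports Complex_Main
begin

definition adj :: "('a \<Rightarrow> 'a \<Rightarrow> real) \<Rightarrow> 'a \<Rightarrow> 'a \<Rightarrow> bool" where
  "adj P x y \<longleftrightarrow> x \<noteq> y \<and> P x y > 0"

definition is_walk :: "'a set \<Rightarrow> ('a \<Rightarrow> 'a \<Rightarrow> real) \<Rightarrow> 'a list \<Rightarrow> 'a \<Rightarrow> 'a \<Rightarrow> bool" where
  "is_walk V P ps x y \<longleftrightarrow> ps \<noteq> [] \<and> hd ps = x \<and> last ps = y \<and> set ps \<subseteq> V \<and>
     (\<forall>i. Suc i < length ps \<longrightarrow> adj P (ps ! i) (ps ! Suc i))"

definition walk_length :: "('a \<Rightarrow> 'a \<Rightarrow> real) \<Rightarrow> 'a list \<Rightarrow> real" where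
  "walk_length d ps = (\<Sum>i<length ps - 1. d (ps ! i) (ps ! Suc i))"

definition rev_metric_markov_chain ::
  "'a set \<Rightarrow> ('a \<Rightarrow> 'a \<Rightarrow> real) \<Rightarrow> ('a \<Rightarrow> 'a \<Rightarrow> real) \<Rightarrow> bool" where
  "rev_metric_markov_chain V P d \<longleftrightarrow>
     finite V \<and>
     (\<forall>x\<in>V. \<forall>y\<in>V. P x y \<ge> 0) \<and>
     (\<forall>x\<in>V. \<forall>y\<in>V. P x y > 0 \<longleftrightarrow> P y x > 0) \<and>
     (\<forall>x\<in>V. \<forall>y\<in>V. d x y \<ge> 0) \<and>
     (\<forall>x\<in>V. \<forall>y\<in>V. x \<noteq> y \<longrightarrow> d x y > 0) \<and>
     (\<forall>x\<in>V. \<forall>y\<in>V. \<exists>ps. is_walk V P ps x y) \<and>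
     (\<forall>x\<in>V. \<forall>y\<in>V. d x y = Inf {walk_length d ps | ps. is_walk V P ps x y}) \<and>
     (\<exists>m. (\<forall>x\<in>V. m x \<ge> 0) \<and> (\<Sum>x\<in>V. m x) = 1 \<and>
          (\<forall>x\<in>V. \<forall>y\<in>V. m x * P x y = m y * P y x))"

definition Lip1 :: "'a set \<Rightarrow> ('a \<Rightarrow> 'a \<Rightarrow> real) \<Rightarrow> ('a \<Rightarrow> real) \<Rightarrow> bool" where
  "Lip1 V d f \<longleftrightarrow> (\<forall>x\<in>V. \<forall>y\<in>V. \<bar>f y - f x\<bar> \<le> d x y)"

definition laplacian :: "'a set \<Rightarrow> ('a \<Rightarrow> 'a \<Rightarrow> real) \<Rightarrow> ('a \<Rightarrow> real) \<Rightarrow> 'a \<Rightarrow> real" where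
  "laplacian V P f x = (\<Sum>y\<in>V. P x y * (f y - f x))"

definition ollivier_curv ::
  "'a set \<Rightarrow> ('a \<Rightarrow> 'a \<Rightarrow> real) \<Rightarrow> ('a \<Rightarrow> 'a \<Rightarrow> real) \<Rightarrow> 'a \<Rightarrow> 'a \<Rightarrow> real" where
  "ollivier_curv V P d x y =
     Inf {(laplacian V P f x - laplacian V P f y) / d x y | f. Lip1 V d f \<and> f y - f x = d x y}"

definition nonneg_ollivier_curv ::
  "'a set \<Rightarrow> ('a \<Rightarrow> 'a \<Rightarrow> real) \<Rightarrow> ('a \<Rightarrow> 'a \<Rightarrow> real) \<Rightarrow> bool" where
  "nonneg_ollivier_curv V P d \<longleftrightarrow>
     (\<forall>x\<in>V. \<forall>y\<in>V. adj P x y \<longrightarrow> ollivier_curv V P d x y \<ge> 0)"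

end

theory Submission
  imports Defs
begin

text \<open>Let lip_dist be the metric dual to Lip(1). Non-negative curvature says that the Laplacian
  of a 1-Lipschitz function f cannot increase along an edge on which f grows at full speed; by
  induction along geodesics, the same holds for any pair u, v with f v - f u = lip_dist u v.
  Given data \<phi> on K, extend it by the least Lipschitz extension on X and the greatest one on Y;
  since every geodesic from X to Y meets K, the glued function is 1-Lipschitz. One Euler step
  of the heat flow for the glued extension, followed by the greatest extension from K, is a
  monotone map commuting with constants whose values have bounded oscillation on K, so it has an
  additive eigenvector z. The eigenvalue equation forces the Laplacian of the glued extension of z
  to be constant on K, and its extremality on X and on Y yields the inequalities there.\<close>

section \<open>Additive eigenvectors of topical maps\<close>

locale bounded_topical_map =
  fixes K :: "'a set" and T :: "('a \<Rightarrow> real) \<Rightarrow> 'a \<Rightarrow> real" and D :: real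
  assumes finite_K: "finite K" and K_nonempty: "K \<noteq> {}"
    and mono: "(\<And>k. k \<in> K \<Longrightarrow> x k \<le> y k) \<Longrightarrow> k \<in> K \<Longrightarrow> T x k \<le> T y k"
    and add_const: "T (\<lambda>v. x v + c) = (\<lambda>v. T x v + c)"
    and oscillation_bounded: "k \<in> K \<Longrightarrow> k' \<in> K \<Longrightarrow> T x k' - T x k \<le> D"
begin

definition subeigenvalues :: "real set" where
  "subeigenvalues = {l. \<exists>x. \<forall>k\<in>K. T x k \<le> x k + l}"

lemma le_add_const:
  assumes "\<And>k. k \<in> K \<Longrightarrow> x k \<le> y k + c" and "k \<in> K"
  shows "T x k \<le> T y k + c"
  using mono[of x "\<lambda>v. y v + c", OF assms] by (simp add: add_const)

lemma tendsto_T: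
  assumes lim: "\<And>k. k \<in> K \<Longrightarrow> (\<lambda>n. x n k) \<longlonglongrightarrow> z k" and "k \<in> K"
  shows "(\<lambda>n. T (x n) k) \<longlonglongrightarrow> T z k"
proof (rule LIMSEQ_I)
  fix e :: real assume "0 < e"
  have "\<forall>\<^sub>F n in sequentially. \<bar>x n k' - z k'\<bar> < e / 2" if "k' \<in> K" for k'
    using lim[OF that] \<open>0 < e\<close> unfolding tendsto_iff dist_real_def by (meson half_gt_zero)
  then have "\<forall>\<^sub>F n in sequentially. \<forall>k'\<in>K. \<bar>x n k' - z k'\<bar> < e / 2"
    by (intro eventually_ball_finite finite_K) blast
  then obtain N where N: "\<And>n k'. n \<ge> N \<Longrightarrow> k' \<in> K \<Longrightarrow> \<bar>x n k' - z k'\<bar> < e / 2"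
    unfolding eventually_sequentially by blast
  have "\<bar>T (x n) k - T z k\<bar> < e" if "n \<ge> N" for n
  proof -
    have close: "x n k' \<le> z k' + e / 2" "z k' \<le> x n k' + e / 2" if "k' \<in> K" for k'
      using abs_less_iff[THEN iffD1, OF N[OF \<open>n \<ge> N\<close> that]] by auto
    have "T (x n) k \<le> T z k + e / 2" "T z k \<le> T (x n) k + e / 2"
      using le_add_const[OF close(1) \<open>k \<in> K\<close>] le_add_const[OF close(2) \<open>k \<in> K\<close>] by auto
    with \<open>0 < e\<close> show ?thesis by linarith
  qed
  then show "\<exists>N. \<forall>n\<ge>N. norm (T (x n) k - T z k) < e" by auto
qed

lemma iterate_subeigenvector:
  assumes "\<forall>k\<in>K. T x k \<le> x k + l"
  shows "\<forall>k\<in>K. (T ^^ Suc n) x k \<le> (T ^^ n) x k + l"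
proof (induction n)
  case 0
  then show ?case using assms by simp
next
  case (Suc n)
  then show ?case by (simp add: le_add_const)
qed

lemma subeigenvalues_nonempty: "subeigenvalues \<noteq> {}"
proof -
  have "\<forall>k\<in>K. T (\<lambda>_. 0) k \<le> 0 + Max (T (\<lambda>_. 0) ` K)"
    using finite_K by simp
  then show ?thesis unfolding subeigenvalues_def by blast
qed

lemma subeigenvalues_bdd_below: "bdd_below subeigenvalues"
proof (rule bdd_belowI)
  fix l assume "l \<in> subeigenvalues"
  then obtain x where x: "\<forall>k\<in>K. T x k \<le> x k + l" unfolding subeigenvalues_def by blast
  have "Min (x ` K) \<in> x ` K"
    using finite_K K_nonempty by simp
  then obtain k0 where k0: "k0 \<in> K" "x k0 = Min (x ` K)"
    by (metis imageE)
  have "T (\<lambda>_. 0) k0 + x k0 = T (\<lambda>v. 0 + x k0) k0"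
    using add_const[of "\<lambda>_. 0" "x k0"] by simp
  also have "\<dots> \<le> T x k0"
    using k0 finite_K by (intro mono) auto
  also have "\<dots> \<le> x k0 + l"
    using x k0(1) by blast
  finally have "T (\<lambda>_. 0) k0 \<le> l" by simp
  then show "Min (T (\<lambda>_. 0) ` K) \<le> l"
    using k0(1) finite_K by (meson Min_le finite_imageI image_eqI order_trans)
qed

lemma subeigenvalues_upward_closed:
  assumes "l \<in> subeigenvalues" and "l \<le> m"
  shows "m \<in> subeigenvalues"
proof -
  obtain x where "\<forall>k\<in>K. T x k \<le> x k + l"
    using assms(1) unfolding subeigenvalues_def by blast
  then have "\<forall>k\<in>K. T x k \<le> x k + m"
    using assms(2) by fastforce
  then show ?thesis unfolding subeigenvalues_def by blast
qed

lemma bounded_subeigenvector: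
  assumes "l \<in> subeigenvalues" and "k0 \<in> K"
  obtains y where "\<forall>k\<in>K. T y k \<le> y k + l" and "\<And>k. k \<in> K \<Longrightarrow> \<bar>y k\<bar> \<le> D"
proof -
  obtain x where x: "\<forall>k\<in>K. T x k \<le> x k + l"
    using assms(1) unfolding subeigenvalues_def by blast
  define y where "y = (\<lambda>v. T x v - T x k0)"
  have "\<forall>k\<in>K. T y k \<le> y k + l"
    using iterate_subeigenvector[OF x, of 1] add_const[of "T x" "- T x k0"] by (simp add: y_def)
  moreover have "\<bar>y k\<bar> \<le> D" if "k \<in> K" for k
    using oscillation_bounded[OF that assms(2), of x] oscillation_bounded[OF assms(2) that, of x]
    by (simp add: y_def)
  ultimately show thesis using that by blast
qed

lemma subeigenvalue_of_iterate:
  assumes "0 < n" and iterate: "\<forall>k\<in>K. (T ^^ n) x k \<le> x k + real n * \<mu>"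
  shows "\<mu> \<in> subeigenvalues"
proof -
  define w where "w v = Min ((\<lambda>j. (T ^^ j) x v - real j * \<mu>) ` {..<n})" for v
  have T_w: "T w k \<le> (T ^^ Suc j) x k - real j * \<mu>" if "k \<in> K" "j < n" for k j
  proof -
    have "w v \<le> (T ^^ j) x v + - (real j * \<mu>)" for v
      unfolding w_def using \<open>j < n\<close> by (intro Min_le) auto
    then show ?thesis
      using le_add_const[of w "(T ^^ j) x" "- (real j * \<mu>)", OF _ \<open>k \<in> K\<close>] by simp
  qed
  have "T w k - \<mu> \<le> (T ^^ i) x k - real i * \<mu>" if "k \<in> K" "i < n" for k i
  proof (cases i)
    case 0
    have "T w k \<le> (T ^^ n) x k - (real n - 1) * \<mu>"
      using T_w[OF that(1), of "n - 1"] \<open>0 < n\<close> by (simp add: of_nat_diff)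
    moreover have "(T ^^ n) x k \<le> x k + real n * \<mu>"
      using iterate that(1) by blast
    ultimately show ?thesis
      using 0 by (simp add: left_diff_distrib)
  next
    case (Suc j)
    with T_w[OF that(1), of j] that(2) show ?thesis by (simp add: algebra_simps)
  qed
  then have "T w k - \<mu> \<le> w k" if "k \<in> K" for k
    unfolding w_def using that \<open>0 < n\<close> by (intro Min.boundedI) auto
  then have "\<forall>k\<in>K. T w k \<le> w k + \<mu>"
    by fastforce
  then show ?thesis unfolding subeigenvalues_def by blast
qed

lemma iterate_above_Inf_subeigenvalues:
  assumes "0 < n"
  shows "\<exists>k\<in>K. x k + real n * Inf subeigenvalues - 1 < (T ^^ n) x k"
proof (rule ccontr)
  assume "\<not> ?thesis"
  then have "\<forall>k\<in>K. (T ^^ n) x k \<le> x k + real n * (Inf subeigenvalues - 1 / real n)"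
    using assms by (auto simp: algebra_simps not_less)
  then have "Inf subeigenvalues - 1 / real n \<in> subeigenvalues"
    by (rule subeigenvalue_of_iterate[OF assms])
  then have "Inf subeigenvalues \<le> Inf subeigenvalues - 1 / real n"
    by (rule cInf_lower[OF _ subeigenvalues_bdd_below])
  with assms show False by simp
qed

lemma subeigenvector_INF:
  assumes "A \<noteq> {}" and bdd: "\<And>k. k \<in> K \<Longrightarrow> bdd_below ((\<lambda>i. y i k) ` A)"
    and sub: "\<And>i. i \<in> A \<Longrightarrow> \<forall>k\<in>K. T (y i) k \<le> y i k + l"
  shows "\<forall>k\<in>K. T (\<lambda>v. INF i\<in>A. y i v) k \<le> (INF i\<in>A. y i k) + l"
proof
  fix k assume "k \<in> K"
  have "T (\<lambda>v. INF i\<in>A. y i v) k - l \<le> y i k" if "i \<in> A" for i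
  proof -
    have "T (\<lambda>v. INF i\<in>A. y i v) k \<le> T (y i) k"
      using \<open>k \<in> K\<close> \<open>i \<in> A\<close> bdd by (intro mono cINF_lower) auto
    with sub[OF that] \<open>k \<in> K\<close> show ?thesis by fastforce
  qed
  then have "T (\<lambda>v. INF i\<in>A. y i v) k - l \<le> (INF i\<in>A. y i k)"
    using \<open>A \<noteq> {}\<close> by (intro cINF_greatest) auto
  then show "T (\<lambda>v. INF i\<in>A. y i v) k \<le> (INF i\<in>A. y i k) + l" by simp
qed

lemma subeigenvector_limit:
  assumes lim: "\<And>k. k \<in> K \<Longrightarrow> (\<lambda>n. x n k) \<longlonglongrightarrow> z k" and "l \<longlonglongrightarrow> c"
    and sub: "\<And>n. \<forall>k\<in>K. T (x n) k \<le> x n k + l n"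
  shows "\<forall>k\<in>K. T z k \<le> z k + c"
proof
  fix k assume "k \<in> K"
  show "T z k \<le> z k + c"
  proof (rule LIMSEQ_le)
    show "(\<lambda>n. T (x n) k) \<longlonglongrightarrow> T z k" using tendsto_T lim \<open>k \<in> K\<close> by blast
    show "(\<lambda>n. x n k + l n) \<longlonglongrightarrow> z k + c" using lim[OF \<open>k \<in> K\<close>] \<open>l \<longlonglongrightarrow> c\<close> by (rule tendsto_add)
  qed (use sub \<open>k \<in> K\<close> in auto)
qed

text \<open>Normalised sub-eigenvectors for sub-eigenvalues decreasing to the infimum are bounded; their
  tail infima increase to a sub-eigenvector for the infimum itself.\<close>
lemma Inf_subeigenvalues_mem: "Inf subeigenvalues \<in> subeigenvalues"
proof -
  define c where "c = Inf subeigenvalues"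
  define l where "l n = c + inverse (real (Suc n))" for n
  have l_mem: "l n \<in> subeigenvalues" for n
  proof -
    obtain l' where "l' \<in> subeigenvalues" "l' < l n"
      using cInf_lessD[OF subeigenvalues_nonempty, of "l n"] by (auto simp: l_def c_def)
    then show ?thesis using subeigenvalues_upward_closed by auto
  qed
  obtain k0 where "k0 \<in> K" using K_nonempty by blast
  have "\<exists>y. (\<forall>k\<in>K. T y k \<le> y k + l n) \<and> (\<forall>k\<in>K. \<bar>y k\<bar> \<le> D)" for n
    using bounded_subeigenvector[OF l_mem \<open>k0 \<in> K\<close>] by metis
  then obtain y where y_sub: "\<And>n. \<forall>k\<in>K. T (y n) k \<le> y n k + l n"
    and y_bdd: "\<And>n k. k \<in> K \<Longrightarrow> \<bar>y n k\<bar> \<le> D"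
    by metis
  have y_bounds: "- D \<le> y n k" "y n k \<le> D" if "k \<in> K" for n k
    using y_bdd[OF that, of n] by linarith+
  then have bdd: "bdd_below ((\<lambda>j. y j k) ` A)" if "k \<in> K" for k A
    using that by (intro bdd_belowI[of _ "- D"]) auto
  define w where "w n = (\<lambda>k. INF j\<in>{n..}. y j k)" for n
  have w_sub: "\<forall>k\<in>K. T (w n) k \<le> w n k + l n" for n
  proof -
    have "\<forall>k\<in>K. T (y j) k \<le> y j k + l n" if "j \<in> {n..}" for j
    proof -
      have "l j \<le> l n" using that by (simp add: l_def le_imp_inverse_le)
      with y_sub[of j] show ?thesis by fastforce
    qed
    then show ?thesis
      unfolding w_def by (rule subeigenvector_INF[rotated 2]) (use bdd in auto)
  qed
  have w_lim: "(\<lambda>n. w n k) \<longlonglongrightarrow> (SUP n. w n k)" if "k \<in> K" for k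
  proof (rule LIMSEQ_incseq_SUP)
    show "incseq (\<lambda>n. w n k)"
      unfolding w_def using bdd[OF that] by (intro incseq_SucI cINF_superset_mono) auto
    have "w n k \<le> y n k" for n
      unfolding w_def using bdd[OF that] by (intro cINF_lower) auto
    then have "w n k \<le> D" for n
      using y_bounds(2)[OF that, of n] by (rule order_trans)
    then show "bdd_above (range (\<lambda>n. w n k))"
      by (intro bdd_aboveI[of _ D]) auto
  qed
  have "l \<longlonglongrightarrow> c"
    unfolding l_def by (rule LIMSEQ_inverse_real_of_nat_add)
  from subeigenvector_limit[OF w_lim this w_sub]
  show ?thesis unfolding subeigenvalues_def c_def by blast
qed

text \<open>For a sub-eigenvector x at the infimum c, the sequence T^(n+1) x - (n+1) c decreases, and it is
  bounded below since otherwise some c - 1/n would be a sub-eigenvalue; its limit is an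
  eigenvector.\<close>
theorem additive_eigenvector: "\<exists>z c. \<forall>k\<in>K. T z k = z k + c"
proof -
  define c where "c = Inf subeigenvalues"
  obtain x where x: "\<forall>k\<in>K. T x k \<le> x k + c"
    using Inf_subeigenvalues_mem unfolding subeigenvalues_def c_def by blast
  define a where "a n = (\<lambda>k. (T ^^ Suc n) x k - real (Suc n) * c)" for n
  have a_dec: "decseq (\<lambda>n. a n k)" if "k \<in> K" for k
  proof (rule decseq_SucI)
    fix n
    show "a (Suc n) k \<le> a n k"
      using iterate_subeigenvector[OF x, of "Suc n"] that by (simp add: a_def algebra_simps)
  qed
  define m where "m = Min (x ` K)"
  have m: "m \<le> x k" if "k \<in> K" for k
    using finite_K that by (simp add: m_def)
  have a_bdd: "m - 1 - D \<le> a n k" if "k \<in> K" for n k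
  proof -
    obtain k' where k': "k' \<in> K" "x k' + real (Suc n) * c - 1 < (T ^^ Suc n) x k'"
      using iterate_above_Inf_subeigenvalues[of "Suc n" x] unfolding c_def by auto
    have "(T ^^ Suc n) x k' - (T ^^ Suc n) x k \<le> D"
      using oscillation_bounded[OF that k'(1)] by simp
    with k' m[OF k'(1)] show ?thesis by (simp add: a_def)
  qed
  define z where "z k = (INF n. a n k)" for k
  have a_lim: "(\<lambda>n. a n k) \<longlonglongrightarrow> z k" if "k \<in> K" for k
    unfolding z_def using a_bdd[OF that] a_dec[OF that]
    by (intro LIMSEQ_decseq_INF bdd_belowI[of _ "m - 1 - D"]) auto
  have T_a: "T (a n) k = a (Suc n) k + c" for n k
    using add_const[of "(T ^^ Suc n) x" "- (real (Suc n) * c)"]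
    by (simp add: a_def fun_eq_iff algebra_simps)
  have "T z k = z k + c" if "k \<in> K" for k
  proof (rule LIMSEQ_unique)
    show "(\<lambda>n. T (a n) k) \<longlonglongrightarrow> T z k" using tendsto_T a_lim \<open>k \<in> K\<close> by blast
    show "(\<lambda>n. T (a n) k) \<longlonglongrightarrow> z k + c"
      unfolding T_a using LIMSEQ_Suc[OF a_lim[OF that]] by (intro tendsto_add) auto
  qed
  then show ?thesis by blast
qed

end

section \<open>The metric dual to Lip(1)\<close>

lemma finite_rank_induct[consumes 2, case_names step]:
  fixes r :: "'a \<Rightarrow> 'b::linorder"
  assumes "finite V" and "u \<in> V"
    and step: "\<And>u. u \<in> V \<Longrightarrow> (\<And>b. b \<in> V \<Longrightarrow> r b < r u \<Longrightarrow> Q b) \<Longrightarrow> Q u"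
  shows "Q u"
  using \<open>u \<in> V\<close>
proof (induction "card {w\<in>V. r w < r u}" arbitrary: u rule: less_induct)
  case less
  show ?case
  proof (rule step[OF less.prems])
    fix b assume b: "b \<in> V" "r b < r u"
    then have "{w\<in>V. r w < r b} \<subset> {w\<in>V. r w < r u}" by auto
    then have "card {w\<in>V. r w < r b} < card {w\<in>V. r w < r u}"
      using \<open>finite V\<close> by (intro psubset_card_mono) auto
    then show "Q b" using less.hyps b(1) by blast
  qed
qed

lemma laplacian_eq: "laplacian V P f w = (\<Sum>y\<in>V. P w y * f y) - (\<Sum>y\<in>V. P w y) * f w"
  unfolding laplacian_def by (simp add: right_diff_distrib sum_subtractf sum_distrib_right)

lemma laplacian_uminus: "laplacian V P (\<lambda>x. - f x) w = - laplacian V P f w"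
  unfolding laplacian_def by (simp add: sum_negf[symmetric] algebra_simps)

lemma laplacian_add_const: "laplacian V P (\<lambda>x. f x + c) w = laplacian V P f w"
  unfolding laplacian_def by simp

locale metric_chain =
  fixes V :: "'a set" and P d :: "'a \<Rightarrow> 'a \<Rightarrow> real"
  assumes chain: "rev_metric_markov_chain V P d"
begin

lemma finite_V: "finite V"
  and P_nonneg: "x \<in> V \<Longrightarrow> y \<in> V \<Longrightarrow> 0 \<le> P x y"
  and d_nonneg: "x \<in> V \<Longrightarrow> y \<in> V \<Longrightarrow> 0 \<le> d x y"
  and d_pos: "x \<in> V \<Longrightarrow> y \<in> V \<Longrightarrow> x \<noteq> y \<Longrightarrow> 0 < d x y"
  and walk_exists: "x \<in> V \<Longrightarrow> y \<in> V \<Longrightarrow> \<exists>ps. is_walk V P ps x y"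
  and d_eq_Inf_walk_length:
    "x \<in> V \<Longrightarrow> y \<in> V \<Longrightarrow> d x y = Inf {walk_length d ps | ps. is_walk V P ps x y}"
  using chain unfolding rev_metric_markov_chain_def by blast+

lemma adj_sym: "x \<in> V \<Longrightarrow> y \<in> V \<Longrightarrow> adj P x y \<Longrightarrow> adj P y x"
  using chain unfolding rev_metric_markov_chain_def adj_def by auto

lemma min_dist_pos: "x \<in> V \<Longrightarrow> y \<in> V \<Longrightarrow> adj P x y \<Longrightarrow> 0 < min (d x y) (d y x)"
  by (auto simp: adj_def intro!: d_pos)

lemma abs_diff_le_walk_length:
  assumes walk: "is_walk V P ps x y"
    and edges: "\<And>a b. a \<in> V \<Longrightarrow> b \<in> V \<Longrightarrow> adj P a b \<Longrightarrow> \<bar>g b - g a\<bar> \<le> d a b"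
  shows "\<bar>g y - g x\<bar> \<le> walk_length d ps"
proof -
  let ?n = "length ps - 1"
  have ps: "ps \<noteq> []" "hd ps = x" "last ps = y" "set ps \<subseteq> V"
    and steps: "\<And>i. Suc i < length ps \<Longrightarrow> adj P (ps ! i) (ps ! Suc i)"
    using walk by (auto simp: is_walk_def)
  have "g y - g x = (\<Sum>i<?n. g (ps ! Suc i) - g (ps ! i))"
    using sum_lessThan_telescope[of "\<lambda>i. g (ps ! i)" ?n] ps by (simp add: last_conv_nth hd_conv_nth)
  also have "\<bar>\<dots>\<bar> \<le> (\<Sum>i<?n. \<bar>g (ps ! Suc i) - g (ps ! i)\<bar>)"
    by (rule sum_abs)
  also have "\<dots> \<le> (\<Sum>i<?n. d (ps ! i) (ps ! Suc i))"
  proof (rule sum_mono)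
    fix i assume "i \<in> {..<?n}"
    then have "Suc i < length ps" by auto
    moreover from this have "ps ! i \<in> V" "ps ! Suc i \<in> V"
      using ps(4) nth_mem[of i ps] nth_mem[of "Suc i" ps] by auto
    ultimately show "\<bar>g (ps ! Suc i) - g (ps ! i)\<bar> \<le> d (ps ! i) (ps ! Suc i)"
      using edges steps by blast
  qed
  finally show ?thesis by (simp add: walk_length_def)
qed

lemma Lip1_if_edges:
  assumes "\<And>a b. a \<in> V \<Longrightarrow> b \<in> V \<Longrightarrow> adj P a b \<Longrightarrow> \<bar>g b - g a\<bar> \<le> d a b"
  shows "Lip1 V d g"
  unfolding Lip1_def
proof (intro ballI)
  fix x y assume "x \<in> V" "y \<in> V"
  show "\<bar>g y - g x\<bar> \<le> d x y"
    unfolding d_eq_Inf_walk_length[OF \<open>x \<in> V\<close> \<open>y \<in> V\<close>]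
  proof (rule cInf_greatest)
    show "{walk_length d ps | ps. is_walk V P ps x y} \<noteq> {}"
      using walk_exists[OF \<open>x \<in> V\<close> \<open>y \<in> V\<close>] by blast
  qed (use abs_diff_le_walk_length[OF _ assms] in blast)
qed

lemma Lip1_const: "Lip1 V d (\<lambda>_. c)"
  using d_nonneg by (simp add: Lip1_def)

lemma Lip1_uminus: "Lip1 V d g \<Longrightarrow> Lip1 V d (\<lambda>x. - g x)"
  unfolding Lip1_def by (simp add: abs_minus_commute)

lemma Lip1_diff_le:
  assumes "Lip1 V d g" "x \<in> V" "y \<in> V"
  shows "g y - g x \<le> min (d x y) (d y x)"
proof -
  have "\<bar>g y - g x\<bar> \<le> d x y" "\<bar>g x - g y\<bar> \<le> d y x"
    using assms unfolding Lip1_def by blast+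
  then show ?thesis by (simp add: abs_le_iff)
qed

text \<open>As d need not be symmetric, Lip(1) controls increments along x, y only by
  min (d x y) (d y x); lip_dist is the symmetric metric this induces.\<close>
definition lip_dist :: "'a \<Rightarrow> 'a \<Rightarrow> real" where
  "lip_dist u v = Sup {g v - g u | g. Lip1 V d g}"

lemma Lip1_le_lip_dist:
  assumes "Lip1 V d g" "u \<in> V" "v \<in> V"
  shows "g v - g u \<le> lip_dist u v"
  unfolding lip_dist_def
proof (rule cSup_upper)
  show "g v - g u \<in> {g v - g u | g. Lip1 V d g}"
    using assms(1) by blast
  show "bdd_above {g v - g u | g. Lip1 V d g}"
    using Lip1_diff_le assms(2,3) by (intro bdd_aboveI[of _ "d u v"]) fastforce
qed

lemma lip_dist_least: "(\<And>g. Lip1 V d g \<Longrightarrow> g v - g u \<le> c) \<Longrightarrow> lip_dist u v \<le> c"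
  unfolding lip_dist_def by (rule cSup_least) (use Lip1_const in auto)

lemma lip_dist_le_dist: "u \<in> V \<Longrightarrow> v \<in> V \<Longrightarrow> lip_dist u v \<le> min (d u v) (d v u)"
  by (rule lip_dist_least) (rule Lip1_diff_le)

lemma lip_dist_self: "u \<in> V \<Longrightarrow> lip_dist u u = 0"
  using lip_dist_least[of u u 0] Lip1_le_lip_dist[OF Lip1_const[of 0]] by fastforce

lemma lip_dist_triangle:
  assumes "u \<in> V" "v \<in> V" "w \<in> V"
  shows "lip_dist u w \<le> lip_dist u v + lip_dist v w"
proof (rule lip_dist_least)
  fix g assume g: "Lip1 V d g"
  show "g w - g u \<le> lip_dist u v + lip_dist v w"
    using Lip1_le_lip_dist[OF g assms(1,2)] Lip1_le_lip_dist[OF g assms(2,3)] by linarith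
qed

lemma lip_dist_sym:
  assumes "u \<in> V" "v \<in> V"
  shows "lip_dist u v = lip_dist v u"
proof -
  have le: "lip_dist u v \<le> lip_dist v u" if "u \<in> V" "v \<in> V" for u v
  proof (rule lip_dist_least)
    fix g assume "Lip1 V d g"
    then show "g v - g u \<le> lip_dist v u"
      using Lip1_le_lip_dist[OF Lip1_uminus \<open>v \<in> V\<close> \<open>u \<in> V\<close>] by simp
  qed
  show ?thesis using le[OF assms] le[OF assms(2,1)] by simp
qed

definition lip_on :: "'a set \<Rightarrow> ('a \<Rightarrow> real) \<Rightarrow> bool" where
  "lip_on S \<phi> \<longleftrightarrow> (\<forall>u\<in>S. \<forall>v\<in>S. \<phi> v - \<phi> u \<le> lip_dist u v)"

lemma Lip1_iff_lip_on: "Lip1 V d g \<longleftrightarrow> lip_on V g"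
proof
  show "Lip1 V d g \<Longrightarrow> lip_on V g"
    unfolding lip_on_def using Lip1_le_lip_dist by blast
next
  assume g: "lip_on V g"
  show "Lip1 V d g"
    unfolding Lip1_def
  proof (intro ballI)
    fix x y assume "x \<in> V" "y \<in> V"
    then have "g y - g x \<le> lip_dist x y" "g x - g y \<le> lip_dist y x"
      using g unfolding lip_on_def by blast+
    moreover have "lip_dist y x = lip_dist x y"
      using lip_dist_sym \<open>x \<in> V\<close> \<open>y \<in> V\<close> by blast
    ultimately have "g y - g x \<le> lip_dist x y" "g x - g y \<le> lip_dist x y"
      by simp_all
    with lip_dist_le_dist[OF \<open>x \<in> V\<close> \<open>y \<in> V\<close>] show "\<bar>g y - g x\<bar> \<le> d x y"
      by (simp add: abs_le_iff)
  qed
qed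

lemma Lip1_lip_dist_to:
  assumes "v \<in> V"
  shows "Lip1 V d (\<lambda>w. lip_dist w v)"
  unfolding Lip1_iff_lip_on lip_on_def
proof (intro ballI)
  fix a b assume "a \<in> V" "b \<in> V"
  then show "lip_dist b v - lip_dist a v \<le> lip_dist a b"
    using lip_dist_triangle[OF \<open>b \<in> V\<close> \<open>a \<in> V\<close> assms] lip_dist_sym[OF \<open>a \<in> V\<close> \<open>b \<in> V\<close>]
    by linarith
qed

lemma Lip1_lower_at:
  assumes g: "Lip1 V d g" and "u \<in> V" and "0 \<le> t"
    and neighbours: "\<And>b. b \<in> V \<Longrightarrow> adj P u b \<Longrightarrow> g b - g u + t \<le> min (d u b) (d b u)"
  shows "Lip1 V d (\<lambda>w. g w - (if w = u then t else 0))"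
proof (rule Lip1_if_edges)
  let ?h = "\<lambda>w. g w - (if w = u then t else 0)"
  have at_u: "\<bar>?h b - ?h u\<bar> \<le> min (d u b) (d b u)" if "b \<in> V" "adj P u b" for b
  proof -
    have "b \<noteq> u" using that(2) by (auto simp: adj_def)
    then have "?h b - ?h u = g b - g u + t" by simp
    moreover have "g u - g b \<le> min (d u b) (d b u)"
      using Lip1_diff_le[OF g that(1) \<open>u \<in> V\<close>] by (simp add: min.commute)
    ultimately show ?thesis
      using neighbours[OF that] \<open>0 \<le> t\<close> by (intro abs_leI) linarith+
  qed
  fix a b assume ab: "a \<in> V" "b \<in> V" "adj P a b"
  consider "a = u" | "b = u" | "a \<noteq> u" "b \<noteq> u" by blast
  then show "\<bar>?h b - ?h a\<bar> \<le> d a b"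
  proof cases
    case 1
    then show ?thesis using at_u[of b] ab by auto
  next
    case 2
    then have "adj P u a" using adj_sym[OF ab] by simp
    with 2 show ?thesis using at_u[OF \<open>a \<in> V\<close>] by (simp add: abs_minus_commute)
  next
    case 3
    then show ?thesis using g ab unfolding Lip1_def by auto
  qed
qed

text \<open>Otherwise -lip_dist(., v) could be lowered at u by the least slack without losing the
  Lipschitz property, which would contradict the definition of lip_dist u v.\<close>
lemma lip_dist_geodesic_step:
  assumes "u \<in> V" "v \<in> V" "u \<noteq> v"
  obtains b where "b \<in> V" "adj P u b" "lip_dist u v = min (d u b) (d b u) + lip_dist b v"
proof (rule ccontr)
  note geodesic = that
  assume no_geodesic: "\<not> thesis"
  let ?s = "\<lambda>b. min (d u b) (d b u)"
  define N where "N = {b\<in>V. adj P u b}"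
  define slack where "slack b = ?s b + lip_dist b v - lip_dist u v" for b
  have slack_pos: "0 < slack b" if "b \<in> N" for b
  proof -
    have "b \<in> V" using that N_def by simp
    then have "lip_dist u v \<le> lip_dist u b + lip_dist b v" "lip_dist u b \<le> ?s b"
      using assms lip_dist_triangle lip_dist_le_dist by blast+
    moreover have "lip_dist u v \<noteq> ?s b + lip_dist b v"
      using geodesic no_geodesic \<open>b \<in> V\<close> that N_def by blast
    ultimately show ?thesis unfolding slack_def by linarith
  qed
  define t where "t = Min (insert 1 (slack ` N))"
  have "finite N" using finite_V N_def by simp
  then have "0 < t" and t_le: "\<And>b. b \<in> N \<Longrightarrow> t \<le> slack b"
    using slack_pos by (auto simp: t_def)
  have "Lip1 V d (\<lambda>w. - lip_dist w v - (if w = u then t else 0))"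
  proof (rule Lip1_lower_at[OF Lip1_uminus[OF Lip1_lip_dist_to[OF \<open>v \<in> V\<close>]] \<open>u \<in> V\<close>])
    show "0 \<le> t" using \<open>0 < t\<close> by simp
    fix b assume "b \<in> V" "adj P u b"
    then show "- lip_dist b v - - lip_dist u v + t \<le> ?s b"
      using t_le[of b] N_def unfolding slack_def by auto
  qed
  then have "(- lip_dist v v - (if v = u then t else 0)) - (- lip_dist u v - (if u = u then t else 0))
      \<le> lip_dist u v"
    using \<open>u \<in> V\<close> \<open>v \<in> V\<close> by (rule Lip1_le_lip_dist)
  then have "lip_dist u v + t \<le> lip_dist u v"
    using assms by (simp add: lip_dist_self)
  with \<open>0 < t\<close> show False by simp
qed

definition step_size :: real where
  "step_size = 1 / (1 + (\<Sum>w\<in>V. \<Sum>y\<in>V. P w y))"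

lemma step_size_pos: "0 < step_size"
proof -
  have "0 \<le> (\<Sum>w\<in>V. \<Sum>y\<in>V. P w y)"
    using P_nonneg by (simp add: sum_nonneg)
  then show ?thesis unfolding step_size_def by simp
qed

lemma step_size_mult_rowsum_le: "w \<in> V \<Longrightarrow> step_size * (\<Sum>y\<in>V. P w y) \<le> 1"
proof -
  assume "w \<in> V"
  then have "(\<Sum>y\<in>V. P w y) \<le> (\<Sum>w\<in>V. \<Sum>y\<in>V. P w y)"
    using finite_V P_nonneg by (intro member_le_sum) (auto intro: sum_nonneg)
  moreover have "0 \<le> (\<Sum>y\<in>V. P w y)"
    using \<open>w \<in> V\<close> P_nonneg by (simp add: sum_nonneg)
  ultimately show ?thesis unfolding step_size_def by (simp add: field_simps)
qed

lemma euler_step_mono: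
  assumes le: "\<And>v. v \<in> V \<Longrightarrow> f v \<le> g v" and "w \<in> V"
  shows "f w + step_size * laplacian V P f w \<le> g w + step_size * laplacian V P g w"
proof -
  let ?r = "\<Sum>y\<in>V. P w y"
  have expand: "h w + step_size * laplacian V P h w
      = (1 - step_size * ?r) * h w + step_size * (\<Sum>y\<in>V. P w y * h y)" for h
    by (simp add: laplacian_eq algebra_simps)
  have "(1 - step_size * ?r) * f w \<le> (1 - step_size * ?r) * g w"
    using step_size_mult_rowsum_le[OF \<open>w \<in> V\<close>] le[OF \<open>w \<in> V\<close>] by (simp add: mult_left_mono)
  moreover have "(\<Sum>y\<in>V. P w y * f y) \<le> (\<Sum>y\<in>V. P w y * g y)"
    using P_nonneg[OF \<open>w \<in> V\<close>] le by (intro sum_mono mult_left_mono) auto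
  ultimately show ?thesis
    unfolding expand using step_size_pos by (simp add: add_mono)
qed

lemma abs_laplacian_le:
  assumes "Lip1 V d g" "w \<in> V"
  shows "\<bar>laplacian V P g w\<bar> \<le> (\<Sum>y\<in>V. P w y * d w y)"
proof -
  have "\<bar>laplacian V P g w\<bar> \<le> (\<Sum>y\<in>V. \<bar>P w y * (g y - g w)\<bar>)"
    unfolding laplacian_def by (rule sum_abs)
  also have "\<dots> \<le> (\<Sum>y\<in>V. P w y * d w y)"
  proof (rule sum_mono)
    fix y assume "y \<in> V"
    then have "\<bar>g y - g w\<bar> \<le> d w y"
      using assms unfolding Lip1_def by blast
    then show "\<bar>P w y * (g y - g w)\<bar> \<le> P w y * d w y"
      using P_nonneg[OF \<open>w \<in> V\<close> \<open>y \<in> V\<close>] by (simp add: abs_mult mult_left_mono)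
  qed
  finally show ?thesis .
qed

end

section \<open>Non-negative curvature along geodesics\<close>

locale nonneg_curv_chain = metric_chain +
  assumes nonneg_curv: "nonneg_ollivier_curv V P d"
begin

lemma laplacian_le_if_diff_eq_dist:
  assumes f: "Lip1 V d f" and uv: "u \<in> V" "v \<in> V" "adj P u v" and tight: "f v - f u = d u v"
  shows "laplacian V P f v \<le> laplacian V P f u"
proof -
  define S where "S = {(laplacian V P g u - laplacian V P g v) / d u v | g. Lip1 V d g \<and> g v - g u = d u v}"
  have "0 < d u v" using d_pos uv by (auto simp: adj_def)
  have "0 \<le> Inf S"
    using nonneg_curv uv unfolding nonneg_ollivier_curv_def ollivier_curv_def S_def by blast
  also have "Inf S \<le> (laplacian V P f u - laplacian V P f v) / d u v"
  proof (rule cInf_lower)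
    show "(laplacian V P f u - laplacian V P f v) / d u v \<in> S"
      unfolding S_def using f tight by blast
    define B where "B = (\<Sum>y\<in>V. P u y * d u y) + (\<Sum>y\<in>V. P v y * d v y)"
    show "bdd_below S"
    proof (rule bdd_belowI)
      fix s assume "s \<in> S"
      then obtain g where g: "Lip1 V d g" and s: "s = (laplacian V P g u - laplacian V P g v) / d u v"
        unfolding S_def by blast
      have "- B \<le> laplacian V P g u - laplacian V P g v"
        using abs_laplacian_le[OF g uv(1)] abs_laplacian_le[OF g uv(2)] unfolding B_def by linarith
      then show "- B / d u v \<le> s"
        unfolding s using divide_right_mono[OF _ less_imp_le[OF \<open>0 < d u v\<close>]] by blast
    qed
  qed
  finally show ?thesis
    using \<open>0 < d u v\<close> by (simp add: zero_le_divide_iff)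
qed

lemma laplacian_le_on_edge:
  assumes f: "Lip1 V d f" and uv: "u \<in> V" "v \<in> V" "adj P u v"
    and tight: "f v - f u = min (d u v) (d v u)"
  shows "laplacian V P f v \<le> laplacian V P f u"
proof (cases "d u v \<le> d v u")
  case True
  then show ?thesis using laplacian_le_if_diff_eq_dist[OF f uv] tight by simp
next
  case False
  have "laplacian V P (\<lambda>x. - f x) u \<le> laplacian V P (\<lambda>x. - f x) v"
    using False tight
    by (intro laplacian_le_if_diff_eq_dist[OF Lip1_uminus[OF f] uv(2,1) adj_sym[OF uv]]) simp
  then show ?thesis by (simp add: laplacian_uminus)
qed

lemma laplacian_le_on_geodesic:
  assumes f: "Lip1 V d f" and "u \<in> V" "v \<in> V" and tight: "f v - f u = lip_dist u v"
  shows "laplacian V P f v \<le> laplacian V P f u"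
proof -
  have "f v - f u = lip_dist u v \<longrightarrow> laplacian V P f v \<le> laplacian V P f u"
    using finite_V \<open>u \<in> V\<close>
  proof (induction u rule: finite_rank_induct[where r = "\<lambda>w. lip_dist w v"])
    case (step u)
    show ?case
    proof (intro impI)
      assume tight_u: "f v - f u = lip_dist u v"
      show "laplacian V P f v \<le> laplacian V P f u"
      proof (cases "u = v")
        case False
        then obtain b where b: "b \<in> V" "adj P u b" "lip_dist u v = min (d u b) (d b u) + lip_dist b v"
          by (rule lip_dist_geodesic_step[OF step.hyps \<open>v \<in> V\<close>])
        have "0 < min (d u b) (d b u)"
          using step.hyps b(1,2) by (rule min_dist_pos)
        have "f b - f u \<le> min (d u b) (d b u)"
          by (rule Lip1_diff_le[OF f step.hyps b(1)])
        moreover have "f v - f b \<le> lip_dist b v"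
          by (rule Lip1_le_lip_dist[OF f b(1) \<open>v \<in> V\<close>])
        ultimately have edge: "f b - f u = min (d u b) (d b u)" and rest: "f v - f b = lip_dist b v"
          using tight_u b(3) by linarith+
        have "laplacian V P f b \<le> laplacian V P f u"
          by (rule laplacian_le_on_edge[OF f step.hyps b(1,2) edge])
        moreover have "lip_dist b v < lip_dist u v"
          using b(3) \<open>0 < min (d u b) (d b u)\<close> by linarith
        then have "laplacian V P f v \<le> laplacian V P f b"
          using step.IH[OF b(1)] rest by blast
        ultimately show ?thesis by linarith
      qed simp
    qed
  qed
  with tight show ?thesis by blast
qed

end

section \<open>Extremal Lipschitz extensions from K\<close>

locale separated_chain = metric_chain +
  fixes X K Y :: "'a set"
  assumes V_eq: "V = X \<union> K \<union> Y"
    and X_Y_disjoint: "X \<inter> Y = {}"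
    and K_nonempty: "K \<noteq> {}"
    and no_adj: "\<not> (\<exists>x\<in>X. \<exists>y\<in>Y. adj P x y)"
begin

lemma finite_K: "finite K"
  using finite_V V_eq by (simp add: finite_subset)

lemma K_subset: "K \<subseteq> V"
  using V_eq by blast

lemma lip_dist_via_K:
  assumes "u \<in> V - Y" "v \<in> Y"
  shows "\<exists>k\<in>K. lip_dist u k + lip_dist k v \<le> lip_dist u v"
proof -
  have "u \<in> V" "v \<in> V" using assms V_eq by auto
  have "u \<notin> Y \<longrightarrow> (\<exists>k\<in>K. lip_dist u k + lip_dist k v \<le> lip_dist u v)"
    using finite_V \<open>u \<in> V\<close>
  proof (induction u rule: finite_rank_induct[where r = "\<lambda>w. lip_dist w v"])
    case (step u)
    show ?case
    proof (intro impI)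
      assume "u \<notin> Y"
      show "\<exists>k\<in>K. lip_dist u k + lip_dist k v \<le> lip_dist u v"
      proof (cases "u \<in> K")
        case True
        then show ?thesis using lip_dist_self[OF step.hyps] by force
      next
        case False
        with \<open>u \<notin> Y\<close> step.hyps have "u \<in> X" using V_eq by blast
        then have "u \<noteq> v" using X_Y_disjoint \<open>v \<in> Y\<close> by blast
        then obtain b where b: "b \<in> V" "adj P u b" "lip_dist u v = min (d u b) (d b u) + lip_dist b v"
          by (rule lip_dist_geodesic_step[OF step.hyps \<open>v \<in> V\<close>])
        have "0 < min (d u b) (d b u)"
          using step.hyps b(1,2) by (rule min_dist_pos)
        moreover have "b \<notin> Y" using no_adj \<open>u \<in> X\<close> b(2) by blast
        ultimately obtain k where k: "k \<in> K" "lip_dist b k + lip_dist k v \<le> lip_dist b v"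
          using step.IH[OF b(1)] b(3) by auto
        have "lip_dist u k \<le> lip_dist u b + lip_dist b k"
          using lip_dist_triangle step.hyps b(1) k(1) K_subset by blast
        with k b(3) lip_dist_le_dist[OF step.hyps b(1)] show ?thesis by force
      qed
    qed
  qed
  with assms show ?thesis by blast
qed

definition least_ext :: "('a \<Rightarrow> real) \<Rightarrow> 'a \<Rightarrow> real" where
  "least_ext \<phi> v = Max ((\<lambda>k. \<phi> k - lip_dist k v) ` K)"

definition greatest_ext :: "('a \<Rightarrow> real) \<Rightarrow> 'a \<Rightarrow> real" where
  "greatest_ext \<phi> v = Min ((\<lambda>k. \<phi> k + lip_dist k v) ` K)"

definition glued_ext :: "('a \<Rightarrow> real) \<Rightarrow> 'a \<Rightarrow> real" where
  "glued_ext \<phi> v = (if v \<in> Y then greatest_ext \<phi> v else least_ext \<phi> v)"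

lemma least_ext_ge: "k \<in> K \<Longrightarrow> \<phi> k - lip_dist k v \<le> least_ext \<phi> v"
  unfolding least_ext_def using finite_K by simp

lemma least_ext_attained:
  obtains k where "k \<in> K" "least_ext \<phi> v = \<phi> k - lip_dist k v"
proof -
  have "least_ext \<phi> v \<in> (\<lambda>k. \<phi> k - lip_dist k v) ` K"
    unfolding least_ext_def using finite_K K_nonempty by (intro Max_in) auto
  then show thesis using that by blast
qed

lemma greatest_ext_le: "k \<in> K \<Longrightarrow> greatest_ext \<phi> v \<le> \<phi> k + lip_dist k v"
  unfolding greatest_ext_def using finite_K by simp

lemma greatest_ext_attained:
  obtains k where "k \<in> K" "greatest_ext \<phi> v = \<phi> k + lip_dist k v"
proof -
  have "greatest_ext \<phi> v \<in> (\<lambda>k. \<phi> k + lip_dist k v) ` K"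
    unfolding greatest_ext_def using finite_K K_nonempty by (intro Min_in) auto
  then show thesis using that by blast
qed

lemma least_ext_mono:
  assumes "\<And>k. k \<in> K \<Longrightarrow> \<phi> k \<le> \<psi> k"
  shows "least_ext \<phi> v \<le> least_ext \<psi> v"
proof -
  obtain k where "k \<in> K" "least_ext \<phi> v = \<phi> k - lip_dist k v" by (rule least_ext_attained)
  with assms least_ext_ge[of k \<psi> v] show ?thesis by force
qed

lemma greatest_ext_mono:
  assumes "\<And>k. k \<in> K \<Longrightarrow> \<phi> k \<le> \<psi> k"
  shows "greatest_ext \<phi> v \<le> greatest_ext \<psi> v"
proof -
  obtain k where "k \<in> K" "greatest_ext \<psi> v = \<psi> k + lip_dist k v" by (rule greatest_ext_attained)
  with assms greatest_ext_le[of k \<phi> v] show ?thesis by force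
qed

lemma least_ext_add_const: "least_ext (\<lambda>v. \<phi> v + c) = (\<lambda>v. least_ext \<phi> v + c)"
proof
  fix v
  have "least_ext (\<lambda>v. \<phi> v + c) v = Max ((\<lambda>k. (\<phi> k - lip_dist k v) + c) ` K)"
    unfolding least_ext_def by (simp add: algebra_simps)
  also have "\<dots> = least_ext \<phi> v + c"
    unfolding least_ext_def by (rule Max_add_commute[OF finite_K K_nonempty])
  finally show "least_ext (\<lambda>v. \<phi> v + c) v = least_ext \<phi> v + c" .
qed

lemma greatest_ext_add_const: "greatest_ext (\<lambda>v. \<phi> v + c) = (\<lambda>v. greatest_ext \<phi> v + c)"
proof
  fix v
  have "greatest_ext (\<lambda>v. \<phi> v + c) v = Min ((\<lambda>k. (\<phi> k + lip_dist k v) + c) ` K)"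
    unfolding greatest_ext_def by (simp add: algebra_simps)
  also have "\<dots> = greatest_ext \<phi> v + c"
    unfolding greatest_ext_def by (rule Min_add_commute[OF finite_K K_nonempty])
  finally show "greatest_ext (\<lambda>v. \<phi> v + c) v = greatest_ext \<phi> v + c" .
qed

lemma least_ext_diff_le:
  assumes "u \<in> V" "v \<in> V"
  shows "least_ext \<phi> v - least_ext \<phi> u \<le> lip_dist u v"
proof -
  obtain k where k: "k \<in> K" "least_ext \<phi> v = \<phi> k - lip_dist k v" by (rule least_ext_attained)
  then have "k \<in> V" using K_subset by blast
  then have "lip_dist k u \<le> lip_dist k v + lip_dist u v"
    using lip_dist_triangle[OF \<open>k \<in> V\<close> assms(2,1)] lip_dist_sym[OF assms] by linarith
  with k least_ext_ge[OF k(1), of \<phi> u] show ?thesis by linarith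
qed

lemma greatest_ext_diff_le:
  assumes "u \<in> V" "v \<in> V"
  shows "greatest_ext \<phi> v - greatest_ext \<phi> u \<le> lip_dist u v"
proof -
  obtain k where k: "k \<in> K" "greatest_ext \<phi> u = \<phi> k + lip_dist k u" by (rule greatest_ext_attained)
  then have "lip_dist k v \<le> lip_dist k u + lip_dist u v"
    using lip_dist_triangle[OF _ assms] K_subset by blast
  with k greatest_ext_le[OF k(1), of \<phi> v] show ?thesis by linarith
qed

lemma least_ext_on_K:
  assumes "lip_on K \<phi>" "k \<in> K"
  shows "least_ext \<phi> k = \<phi> k"
proof -
  obtain k' where k': "k' \<in> K" "least_ext \<phi> k = \<phi> k' - lip_dist k' k"
    by (rule least_ext_attained)
  moreover have "\<phi> k' - \<phi> k \<le> lip_dist k k'"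
    using assms k'(1) unfolding lip_on_def by blast
  moreover have "lip_dist k k = 0" "lip_dist k k' = lip_dist k' k"
    using assms(2) k'(1) K_subset by (auto intro: lip_dist_self lip_dist_sym)
  ultimately show ?thesis
    using least_ext_ge[OF assms(2), of \<phi> k] by linarith
qed

lemma greatest_ext_on_K:
  assumes "lip_on K \<phi>" "k \<in> K"
  shows "greatest_ext \<phi> k = \<phi> k"
proof -
  obtain k' where k': "k' \<in> K" "greatest_ext \<phi> k = \<phi> k' + lip_dist k' k"
    by (rule greatest_ext_attained)
  moreover have "\<phi> k - \<phi> k' \<le> lip_dist k' k"
    using assms k'(1) unfolding lip_on_def by blast
  moreover have "lip_dist k k = 0"
    using assms(2) K_subset by (intro lip_dist_self) auto
  ultimately show ?thesis
    using greatest_ext_le[OF assms(2), of \<phi> k] by linarith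
qed

lemma lip_on_greatest_ext: "lip_on K (greatest_ext \<phi>)"
  unfolding lip_on_def using greatest_ext_diff_le K_subset by blast

lemma glued_ext_on_K: "lip_on K \<phi> \<Longrightarrow> k \<in> K \<Longrightarrow> glued_ext \<phi> k = \<phi> k"
  by (simp add: glued_ext_def least_ext_on_K greatest_ext_on_K)

lemma glued_ext_mono: "(\<And>k. k \<in> K \<Longrightarrow> \<phi> k \<le> \<psi> k) \<Longrightarrow> glued_ext \<phi> v \<le> glued_ext \<psi> v"
  by (simp add: glued_ext_def least_ext_mono greatest_ext_mono)

lemma glued_ext_add_const: "glued_ext (\<lambda>v. \<phi> v + c) = (\<lambda>v. glued_ext \<phi> v + c)"
  by (simp add: glued_ext_def least_ext_add_const greatest_ext_add_const fun_eq_iff)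

lemma least_ext_minus_greatest_ext_le:
  assumes \<phi>: "lip_on K \<phi>" and "u \<in> V" "v \<in> V"
  shows "least_ext \<phi> v - greatest_ext \<phi> u \<le> lip_dist u v"
proof -
  obtain k where k: "k \<in> K" "least_ext \<phi> v = \<phi> k - lip_dist k v" by (rule least_ext_attained)
  obtain k' where k': "k' \<in> K" "greatest_ext \<phi> u = \<phi> k' + lip_dist k' u" by (rule greatest_ext_attained)
  have "\<phi> k - \<phi> k' \<le> lip_dist k' k" using \<phi> k(1) k'(1) unfolding lip_on_def by blast
  moreover have "k \<in> V" "k' \<in> V" using k(1) k'(1) K_subset by blast+
  then have "lip_dist k' k \<le> lip_dist k' u + lip_dist u v + lip_dist v k"
    using lip_dist_triangle[OF \<open>k' \<in> V\<close> \<open>u \<in> V\<close> \<open>k \<in> V\<close>]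
      lip_dist_triangle[OF \<open>u \<in> V\<close> \<open>v \<in> V\<close> \<open>k \<in> V\<close>] by linarith
  ultimately show ?thesis
    using k(2) k'(2) lip_dist_sym[OF \<open>v \<in> V\<close> \<open>k \<in> V\<close>] by linarith
qed

lemma greatest_ext_minus_least_ext_le:
  assumes "u \<in> V - Y" "v \<in> Y"
  shows "greatest_ext \<phi> v - least_ext \<phi> u \<le> lip_dist u v"
proof -
  obtain k where k: "k \<in> K" "lip_dist u k + lip_dist k v \<le> lip_dist u v"
    using lip_dist_via_K[OF assms] by blast
  moreover have "lip_dist k u = lip_dist u k"
    using lip_dist_sym assms(1) k(1) K_subset by blast
  ultimately show ?thesis
    using greatest_ext_le[OF k(1), of \<phi> v] least_ext_ge[OF k(1), of \<phi> u] by linarith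
qed

lemma glued_ext_Lip1:
  assumes \<phi>: "lip_on K \<phi>"
  shows "Lip1 V d (glued_ext \<phi>)"
  unfolding Lip1_iff_lip_on lip_on_def
proof (intro ballI)
  fix u v assume "u \<in> V" "v \<in> V"
  show "glued_ext \<phi> v - glued_ext \<phi> u \<le> lip_dist u v"
  proof (cases "v \<in> Y")
    case True
    then show ?thesis
      using greatest_ext_minus_least_ext_le[of u v \<phi>] greatest_ext_diff_le[OF \<open>u \<in> V\<close> \<open>v \<in> V\<close>]
      unfolding glued_ext_def by (cases "u \<in> Y") (simp_all add: \<open>u \<in> V\<close>)
  next
    case False
    then show ?thesis
      using least_ext_minus_greatest_ext_le[OF \<phi> \<open>u \<in> V\<close> \<open>v \<in> V\<close>] least_ext_diff_le[OF \<open>u \<in> V\<close> \<open>v \<in> V\<close>]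
      unfolding glued_ext_def by (cases "u \<in> Y") simp_all
  qed
qed

lemma glued_ext_eq_Inf:
  assumes \<phi>: "lip_on K \<phi>" and "x \<in> X"
  shows "glued_ext \<phi> x = Inf {g x | g. Lip1 V d g \<and> (\<forall>k\<in>K. g k = glued_ext \<phi> k)}"
proof (rule cInf_eq_minimum[symmetric])
  show "glued_ext \<phi> x \<in> {g x | g. Lip1 V d g \<and> (\<forall>k\<in>K. g k = glued_ext \<phi> k)}"
    using glued_ext_Lip1[OF \<phi>] by blast
next
  fix s assume "s \<in> {g x | g. Lip1 V d g \<and> (\<forall>k\<in>K. g k = glued_ext \<phi> k)}"
  then obtain g where g: "Lip1 V d g" "\<forall>k\<in>K. g k = \<phi> k" "s = g x"
    using glued_ext_on_K[OF \<phi>] by auto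
  obtain k where k: "k \<in> K" "least_ext \<phi> x = \<phi> k - lip_dist k x" by (rule least_ext_attained)
  have "x \<in> V" "x \<notin> Y" using \<open>x \<in> X\<close> V_eq X_Y_disjoint by auto
  moreover have "k \<in> V" using k(1) K_subset by blast
  ultimately have "g k - g x \<le> lip_dist k x"
    using Lip1_le_lip_dist[OF g(1) \<open>x \<in> V\<close> \<open>k \<in> V\<close>] lip_dist_sym[OF \<open>x \<in> V\<close> \<open>k \<in> V\<close>] by linarith
  then show "glued_ext \<phi> x \<le> s"
    using g k \<open>x \<notin> Y\<close> by (simp add: glued_ext_def)
qed

lemma glued_ext_eq_Sup:
  assumes \<phi>: "lip_on K \<phi>" and "y \<in> Y"
  shows "glued_ext \<phi> y = Sup {g y | g. Lip1 V d g \<and> (\<forall>k\<in>K. g k = glued_ext \<phi> k)}"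
proof (rule cSup_eq_maximum[symmetric])
  show "glued_ext \<phi> y \<in> {g y | g. Lip1 V d g \<and> (\<forall>k\<in>K. g k = glued_ext \<phi> k)}"
    using glued_ext_Lip1[OF \<phi>] by blast
next
  fix s assume "s \<in> {g y | g. Lip1 V d g \<and> (\<forall>k\<in>K. g k = glued_ext \<phi> k)}"
  then obtain g where g: "Lip1 V d g" "\<forall>k\<in>K. g k = \<phi> k" "s = g y"
    using glued_ext_on_K[OF \<phi>] by auto
  obtain k where k: "k \<in> K" "greatest_ext \<phi> y = \<phi> k + lip_dist k y" by (rule greatest_ext_attained)
  have "y \<in> V" using \<open>y \<in> Y\<close> V_eq by auto
  then have "g y - g k \<le> lip_dist k y"
    using Lip1_le_lip_dist[OF g(1)] k(1) K_subset by auto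
  then show "s \<le> glued_ext \<phi> y"
    using g k \<open>y \<in> Y\<close> by (simp add: glued_ext_def)
qed

section \<open>The heat step on K\<close>

text \<open>One explicit Euler step of the heat flow for the glued extension, projected back onto
  lip_dist-Lipschitz data on K; the step size keeps it monotone.\<close>
definition heat_step :: "('a \<Rightarrow> real) \<Rightarrow> 'a \<Rightarrow> real" where
  "heat_step \<phi> = greatest_ext (\<lambda>v. glued_ext \<phi> v + step_size * laplacian V P (glued_ext \<phi>) v)"

lemma heat_step_topical:
  "bounded_topical_map K heat_step (Max ((\<lambda>(k, k'). lip_dist k k') ` (K \<times> K)))"
proof
  show "finite K" "K \<noteq> {}" by (fact finite_K K_nonempty)+
next
  fix \<phi> \<psi> :: "'a \<Rightarrow> real" and k
  assume "\<And>k. k \<in> K \<Longrightarrow> \<phi> k \<le> \<psi> k"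
  then show "heat_step \<phi> k \<le> heat_step \<psi> k"
    unfolding heat_step_def using K_subset
    by (intro greatest_ext_mono euler_step_mono glued_ext_mono) auto
next
  fix \<phi> :: "'a \<Rightarrow> real" and c
  have "(\<lambda>v. glued_ext (\<lambda>v. \<phi> v + c) v + step_size * laplacian V P (glued_ext (\<lambda>v. \<phi> v + c)) v)
      = (\<lambda>v. (glued_ext \<phi> v + step_size * laplacian V P (glued_ext \<phi>) v) + c)"
    unfolding glued_ext_add_const laplacian_add_const by (simp add: algebra_simps)
  then show "heat_step (\<lambda>v. \<phi> v + c) = (\<lambda>v. heat_step \<phi> v + c)"
    unfolding heat_step_def by (simp only: greatest_ext_add_const)
next
  fix \<phi> :: "'a \<Rightarrow> real" and k k'
  assume "k \<in> K" "k' \<in> K"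
  then have "heat_step \<phi> k' - heat_step \<phi> k \<le> lip_dist k k'"
    using lip_on_greatest_ext unfolding heat_step_def lip_on_def by blast
  also have "\<dots> \<le> Max ((\<lambda>(k, k'). lip_dist k k') ` (K \<times> K))"
    using \<open>k \<in> K\<close> \<open>k' \<in> K\<close> finite_K by (intro Max_ge) force+
  finally show "heat_step \<phi> k' - heat_step \<phi> k \<le> Max ((\<lambda>(k, k'). lip_dist k k') ` (K \<times> K))" .
qed

lemma heat_step_eigenvector:
  obtains z c where "lip_on K z" and "\<forall>k\<in>K. heat_step z k = z k + c"
proof -
  note topical = heat_step_topical
  obtain z c where z: "\<forall>k\<in>K. heat_step z k = z k + c"
    using bounded_topical_map.additive_eigenvector[OF topical] by blast
  define z' where "z' = (\<lambda>v. heat_step z v + - c)"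
  have "lip_on K z'"
    using lip_on_greatest_ext unfolding z'_def heat_step_def lip_on_def by simp
  moreover have "heat_step z' k = z' k + c" if "k \<in> K" for k
  proof -
    have "heat_step (heat_step z) k = heat_step (\<lambda>v. z v + c) k"
      using z that by (intro antisym bounded_topical_map.mono[OF topical]) auto
    then show ?thesis
      unfolding z'_def bounded_topical_map.add_const[OF topical] by simp
  qed
  ultimately show thesis
    using that by blast
qed

end

locale separated_nonneg_curv_chain = nonneg_curv_chain + separated_chain
begin

lemma laplacian_glued_ext_X:
  assumes \<phi>: "lip_on K \<phi>" and "x \<in> X"
  obtains k where "k \<in> K" "laplacian V P (glued_ext \<phi>) k \<le> laplacian V P (glued_ext \<phi>) x"
proof -
  obtain k where k: "k \<in> K" "least_ext \<phi> x = \<phi> k - lip_dist k x" by (rule least_ext_attained)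
  have "x \<in> V" "x \<notin> Y" using \<open>x \<in> X\<close> V_eq X_Y_disjoint by auto
  moreover have "k \<in> V" using k(1) K_subset by blast
  ultimately have "glued_ext \<phi> k - glued_ext \<phi> x = lip_dist x k"
    using k glued_ext_on_K[OF \<phi> k(1)] lip_dist_sym[OF \<open>x \<in> V\<close> \<open>k \<in> V\<close>]
    by (simp add: glued_ext_def)
  then have "laplacian V P (glued_ext \<phi>) k \<le> laplacian V P (glued_ext \<phi>) x"
    using K_subset k(1) \<open>x \<in> V\<close> by (intro laplacian_le_on_geodesic glued_ext_Lip1[OF \<phi>]) auto
  with k(1) show thesis by (rule that)
qed

lemma laplacian_glued_ext_Y:
  assumes \<phi>: "lip_on K \<phi>" and "y \<in> Y"
  obtains k where "k \<in> K" "laplacian V P (glued_ext \<phi>) y \<le> laplacian V P (glued_ext \<phi>) k"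
proof -
  obtain k where k: "k \<in> K" "greatest_ext \<phi> y = \<phi> k + lip_dist k y" by (rule greatest_ext_attained)
  have "y \<in> V" using \<open>y \<in> Y\<close> V_eq by auto
  have "glued_ext \<phi> y - glued_ext \<phi> k = lip_dist k y"
    using k glued_ext_on_K[OF \<phi> k(1)] \<open>y \<in> Y\<close> by (simp add: glued_ext_def)
  then have "laplacian V P (glued_ext \<phi>) y \<le> laplacian V P (glued_ext \<phi>) k"
    using K_subset k(1) \<open>y \<in> V\<close> by (intro laplacian_le_on_geodesic glued_ext_Lip1[OF \<phi>]) auto
  with k(1) show thesis by (rule that)
qed

text \<open>The minimum defining heat_step z k is attained at some k', and the eigenvalue equation
  forces z to increase at full speed from k' to k, so curvature transports the lower bound
  c <= step_size * laplacian at k' into an upper bound at k.\<close>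
lemma laplacian_const_on_K:
  assumes z: "lip_on K z" and eigen: "\<forall>k\<in>K. heat_step z k = z k + c"
  shows "\<forall>k\<in>K. laplacian V P (glued_ext z) k = c / step_size"
proof
  let ?f = "glued_ext z"
  let ?L = "\<lambda>k. step_size * laplacian V P ?f k"
  have lower: "c \<le> ?L k" if "k \<in> K" for k
    using greatest_ext_le[OF that, of "\<lambda>v. ?f v + ?L v" k] eigen that lip_dist_self[of k] K_subset
      glued_ext_on_K[OF z that] by (auto simp: heat_step_def)
  fix k assume "k \<in> K"
  obtain k' where k': "k' \<in> K" "heat_step z k = ?f k' + ?L k' + lip_dist k' k"
    unfolding heat_step_def by (rule greatest_ext_attained)
  have "z k - z k' \<le> lip_dist k' k" using z k'(1) \<open>k \<in> K\<close> unfolding lip_on_def by blast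
  then have "?f k - ?f k' = lip_dist k' k" "?L k' = c"
    using k' eigen \<open>k \<in> K\<close> lower[OF k'(1)] glued_ext_on_K[OF z] by auto
  moreover have "laplacian V P ?f k \<le> laplacian V P ?f k'"
    using calculation(1) K_subset k'(1) \<open>k \<in> K\<close>
    by (intro laplacian_le_on_geodesic glued_ext_Lip1[OF z]) auto
  ultimately have "?L k \<le> c"
    using mult_left_mono[OF _ less_imp_le[OF step_size_pos]] by fastforce
  with lower[OF \<open>k \<in> K\<close>] show "laplacian V P ?f k = c / step_size"
    using step_size_pos by (simp add: field_simps)
qed

end

theorem theorem5p1:
  fixes V X K Y :: "'a set" and P d :: "'a \<Rightarrow> 'a \<Rightarrow> real"
  assumes "rev_metric_markov_chain V P d"
    and "nonneg_ollivier_curv V P d"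
    and "V = X \<union> K \<union> Y"
    and "X \<inter> K = {}" and "X \<inter> Y = {}" and "K \<inter> Y = {}"
    and "K \<noteq> {}" and "finite K"
    and "\<not> (\<exists>x\<in>X. \<exists>y\<in>Y. adj P x y)"
  shows "\<exists>f C. Lip1 V d f \<and>
           (\<forall>x\<in>K. laplacian V P f x = C) \<and>
           (\<forall>x\<in>X. f x = Inf {g x | g. Lip1 V d g \<and> (\<forall>k\<in>K. g k = f k)}) \<and>
           (\<forall>y\<in>Y. f y = Sup {g y | g. Lip1 V d g \<and> (\<forall>k\<in>K. g k = f k)}) \<and>
           (\<forall>x\<in>X. laplacian V P f x \<ge> C) \<and>
           (\<forall>y\<in>Y. laplacian V P f y \<le> C)"
proof -
  interpret separated_nonneg_curv_chain V P d X K Y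
    by unfold_locales (use assms in auto)
  obtain z c where z: "lip_on K z" and eigen: "\<forall>k\<in>K. heat_step z k = z k + c"
    by (rule heat_step_eigenvector)
  define f where "f = glued_ext z"
  define C where "C = c / step_size"
  have lap_K: "\<forall>k\<in>K. laplacian V P f k = C"
    unfolding f_def C_def by (rule laplacian_const_on_K[OF z eigen])
  have "C \<le> laplacian V P f x" if "x \<in> X" for x
    using laplacian_glued_ext_X[OF z that] lap_K unfolding f_def by metis
  moreover have "laplacian V P f y \<le> C" if "y \<in> Y" for y
    using laplacian_glued_ext_Y[OF z that] lap_K unfolding f_def by metis
  moreover have "Lip1 V d f"
    unfolding f_def by (rule glued_ext_Lip1[OF z])
  ultimately show ?thesis
    using lap_K glued_ext_eq_Inf[OF z] glued_ext_eq_Sup[OF z] unfolding f_def by blast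
qed

end
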